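(* Let $m\in\mathbb{N}$, $\varepsilon>0$ and $1<q<p$. Let $u$ be a nonnegative locally integrable function and $v\in\mathrm{RH}_\infty\cap A_q$. Then there is $C>0$ such that \[ M_{\Phi_m^\varepsilon}\left(uv^{1-p'}\right)(x)\le C\,M_{\Phi_m^\varepsilon,\,v^{1-q'}}u(x)\,v(x)^{-p'}\,\Psi(v(x)) \] for almost every $x\in\mathbb{R}^n$.
   Context: $w\in A_q$ iff $\sup_Q(\frac1{|Q|}\int_Qw)(\frac1{|Q|}\int_Qw^{1-q'})^{q-1}<\infty$ (cubes with sides parallel to the axes); $w\in\mathrm{RH}_\infty$ iff $\sup_Qw\le\frac C{|Q|}\int_Qw$ for all cubes. $\Phi_m^\varepsilon(\lambda)=\lambda(1+\log^+\lambda)^{m+\varepsilon}$. $\Psi(\lambda)=\lambda^{p'+1-q'}\mathcal{X}_{[0,1)}(\lambda)+\lambda^{p'}\mathcal{X}_{[1,\infty)}(\lambda)$. For a Young function $\varphi$ and weight $w$: $\|f\|_{\varphi,Q,w}=\inf\{\lambda>0:\frac1{w(Q)}\int_Q\varphi(|f|/\lambda)w\le1\}$, $M_{\varphi,w}f(x)=\sup_{Q\ni x}\|f\|_{\varphi,Q,w}$, and $M_\varphi=M_{\varphi,1}$. *)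

theory Defs
  imports "HOL-Analysis.Analysis"
begin

text \<open>Cubes in R^n with sides parallel to the axes (closed; boundaries are null sets).\<close>
definition is_cube :: "'a::euclidean_space set \<Rightarrow> bool" where
  "is_cube Q \<longleftrightarrow> (\<exists>a b s. s > 0 \<and> (\<forall>i\<in>Basis. b \<bullet> i = a \<bullet> i + s) \<and> Q = cbox a b)"

definition conj_exp :: "real \<Rightarrow> real" where
  "conj_exp q = q / (q - 1)"

definition locally_integrable :: "('a::euclidean_space \<Rightarrow> real) \<Rightarrow> bool" where
  "locally_integrable f \<longleftrightarrow> f \<in> borel_measurable lebesgue \<and>
     (\<forall>K. compact K \<longrightarrow> set_integrable lebesgue K f)"

definition weight :: "('a::euclidean_space \<Rightarrow> real) \<Rightarrow> bool" where
  "weight w \<longleftrightarrow> locally_integrable w \<and> (AE x in lebesgue. 0 < w x)"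

definition cube_avg :: "('a::euclidean_space \<Rightarrow> real) \<Rightarrow> 'a set \<Rightarrow> real" where
  "cube_avg f Q = (1 / measure lebesgue Q) * (LINT x:Q|lebesgue. f x)"

text \<open>Muckenhoupt class A_q (the finiteness of the supremum includes integrability
  of w^(1-q') over cubes).\<close>
definition A_class :: "real \<Rightarrow> ('a::euclidean_space \<Rightarrow> real) \<Rightarrow> bool" where
  "A_class q w \<longleftrightarrow> weight w \<and>
     (\<forall>Q. is_cube Q \<longrightarrow> set_integrable lebesgue Q (\<lambda>x. w x powr (1 - conj_exp q))) \<and>
     (\<exists>C. \<forall>Q. is_cube Q \<longrightarrow>
        cube_avg w Q * (cube_avg (\<lambda>x. w x powr (1 - conj_exp q)) Q) powr (q - 1) \<le> C)"

text \<open>Reverse Hoelder class RH_infinity (sup understood as essential sup on Q).\<close>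
definition RH_inf :: "('a::euclidean_space \<Rightarrow> real) \<Rightarrow> bool" where
  "RH_inf w \<longleftrightarrow> weight w \<and>
     (\<exists>C. \<forall>Q. is_cube Q \<longrightarrow> (AE x in lebesgue. x \<in> Q \<longrightarrow> w x \<le> C * cube_avg w Q))"

definition log_plus :: "real \<Rightarrow> real" where
  "log_plus t = max 0 (ln t)"

definition Phi :: "nat \<Rightarrow> real \<Rightarrow> real \<Rightarrow> real" where
  "Phi m \<epsilon> t = t * (1 + log_plus t) powr (real m + \<epsilon>)"

definition Psi :: "real \<Rightarrow> real \<Rightarrow> real \<Rightarrow> real" where
  "Psi p q t = (if t < 1 then t powr (conj_exp p + 1 - conj_exp q) else t powr (conj_exp p))"

text \<open>Weighted Luxemburg norm ||f||_{phi,Q,w}, valued in [0,\<infinity>] (Inf {} = \<infinity>).\<close>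
definition lux_norm :: "(real \<Rightarrow> real) \<Rightarrow> ('a::euclidean_space \<Rightarrow> real) \<Rightarrow> 'a set
     \<Rightarrow> ('a \<Rightarrow> real) \<Rightarrow> ennreal" where
  "lux_norm \<phi> w Q f = Inf (ennreal ` {r::real. r > 0 \<and>
      (\<integral>\<^sup>+ x. ennreal (\<phi> (\<bar>f x\<bar> / r) * w x) * indicator Q x \<partial>lebesgue)
        / (\<integral>\<^sup>+ x. ennreal (w x) * indicator Q x \<partial>lebesgue) \<le> 1})"

text \<open>Weighted Orlicz maximal function M_{phi,w}; M_phi = M_{phi,1}.\<close>
definition orlicz_max :: "(real \<Rightarrow> real) \<Rightarrow> ('a::euclidean_space \<Rightarrow> real) \<Rightarrow> ('a \<Rightarrow> real)
     \<Rightarrow> 'a \<Rightarrow> ennreal" where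
  "orlicz_max \<phi> w f x = (SUP Q\<in>{Q. is_cube Q \<and> x \<in> Q}. lux_norm \<phi> w Q f)"

end

theory Submission
  imports Defs
begin

text \<open>Write \<open>\<alpha> = p' - 1 < \<beta> = q' - 1\<close>. On a cube \<open>Q\<close> with \<open>A = avg\<^sub>Q v\<close>,
  \<open>RH\<^sub>\<infinity>\<close> gives \<open>v \<le> C A\<close> on \<open>Q\<close>, and \<open>A\<^sub>q\<close> gives \<open>avg\<^sub>Q v\<^sup>-\<^sup>\<beta> \<lesssim> A\<^sup>-\<^sup>\<beta>\<close>.
  Since \<open>\<Phi>\<close> is submultiplicative and \<open>\<Phi>(a\<^sup>-\<^sup>\<alpha>/c) \<lesssim> a\<^sup>-\<^sup>\<beta>\<close> for \<open>a \<le> C\<close> (the logarithmic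
  factor is absorbed by the gap \<open>\<beta> - \<alpha>\<close>), the \<open>\<Phi>\<close>-modular of \<open>u v\<^sup>-\<^sup>\<alpha> / (c A\<^sup>-\<^sup>\<alpha> r)\<close>
  on \<open>Q\<close> is dominated by the \<open>v\<^sup>-\<^sup>\<beta>\<close>-weighted modular of \<open>u/r\<close>, whence
  \<open>\<parallel>u v\<^sup>-\<^sup>\<alpha>\<parallel>\<^sub>\<Phi>\<^sub>,\<^sub>Q \<lesssim> A\<^sup>-\<^sup>\<alpha> \<parallel>u\<parallel>\<^sub>\<Phi>\<^sub>,\<^sub>Q\<^sub>,\<^sub>v\<^sub>-\<^sub>\<beta>\<close>. Finally, for almost every \<open>x\<close> one has
  \<open>v(x) \<lesssim> avg\<^sub>Q v\<close> for all cubes \<open>Q \<ni> x\<close> simultaneously, so \<open>A\<^sup>-\<^sup>\<alpha> \<lesssim> v(x)\<^sup>-\<^sup>\<alpha>\<close>, and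
  \<open>v(x)\<^sup>-\<^sup>\<alpha> \<le> v(x)\<^sup>-\<^sup>p\<^sup>' \<Psi>(v(x))\<close>.\<close>

lemma is_cubeE:
  assumes "is_cube (Q::'a::euclidean_space set)"
  obtains a s where "0 < s" "Q = cbox a (a + s *\<^sub>R One)"
proof -
  from assms obtain a b s where s: "0 < s" "\<forall>i\<in>Basis. b \<bullet> i = a \<bullet> i + s" "Q = cbox a b"
    unfolding is_cube_def by blast
  have "b = a + s *\<^sub>R One"
    using s(2) by (auto simp: euclidean_eq_iff[where 'a='a] inner_simps)
  with s that show thesis by blast
qed

lemma is_cube_cbox_One: "0 < s \<Longrightarrow> is_cube (cbox a (a + s *\<^sub>R (One::'a::euclidean_space)))"
  unfolding is_cube_def by (force simp: inner_simps)

lemma measure_cbox_One: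
  assumes "0 < s"
  shows "measure lebesgue (cbox a (a + s *\<^sub>R (One::'a::euclidean_space))) = s ^ DIM('a)"
  using assms by (simp add: content_cbox inner_simps)

lemma is_cube_lmeasurable: "is_cube Q \<Longrightarrow> Q \<in> lmeasurable"
  by (erule is_cubeE) simp

lemma is_cube_compact: "is_cube Q \<Longrightarrow> compact Q"
  by (erule is_cubeE) simp

lemma measure_cube_pos: "is_cube Q \<Longrightarrow> 0 < measure lebesgue Q"
  by (erule is_cubeE) (simp only: measure_cbox_One zero_less_power)

lemma set_integral_nonneg_AE:
  fixes v :: "'a \<Rightarrow> real"
  assumes "AE x in M. 0 \<le> v x"
  shows "0 \<le> (LINT x:Q|M. v x)"
  unfolding set_lebesgue_integral_def
  using assms by (intro integral_nonneg_AE) (auto simp: indicator_def)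

lemma cube_avg_nonneg: "AE x in lebesgue. 0 \<le> v x \<Longrightarrow> 0 \<le> cube_avg v Q"
  by (simp add: cube_avg_def set_integral_nonneg_AE)

lemma weight_set_integrable_cube: "weight v \<Longrightarrow> is_cube Q \<Longrightarrow> set_integrable lebesgue Q v"
  by (simp add: weight_def locally_integrable_def is_cube_compact)

lemma cube_avg_pos:
  assumes v: "weight v" and Q: "is_cube Q"
  shows "0 < cube_avg v Q"
proof -
  have pos: "AE x in lebesgue. 0 < v x" using v by (simp add: weight_def)
  have int: "integrable lebesgue (\<lambda>x. indicator Q x *\<^sub>R v x)"
    using weight_set_integrable_cube[OF v Q] by (simp add: set_integrable_def)
  have "(LINT x:Q|lebesgue. v x) \<noteq> 0"
  proof
    assume "(LINT x:Q|lebesgue. v x) = 0"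
    hence "AE x in lebesgue. indicator Q x *\<^sub>R v x = 0"
      using int pos unfolding set_lebesgue_integral_def
      by (subst (asm) integral_nonneg_eq_0_iff_AE) (auto elim!: eventually_mono simp: indicator_def)
    hence "AE x in lebesgue. x \<notin> Q"
      using pos by eventually_elim (auto simp: indicator_def)
    hence "emeasure lebesgue Q = 0"
      using is_cube_lmeasurable[OF Q] by (subst (asm) AE_iff_measurable[of Q]) auto
    with measure_cube_pos[OF Q] show False by (simp add: measure_def)
  qed
  moreover have "0 \<le> (LINT x:Q|lebesgue. v x)"
    using pos by (intro set_integral_nonneg_AE) (auto elim: eventually_mono)
  ultimately show ?thesis using measure_cube_pos[OF Q] by (simp add: cube_avg_def)
qed

lemma RH_infE:
  assumes "RH_inf v"
  obtains C where "1 \<le> C" "\<And>Q. is_cube Q \<Longrightarrow> AE x in lebesgue. x \<in> Q \<longrightarrow> v x \<le> C * cube_avg v Q"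
proof -
  obtain C0 where C0: "\<And>Q. is_cube Q \<Longrightarrow> AE x in lebesgue. x \<in> Q \<longrightarrow> v x \<le> C0 * cube_avg v Q"
    using assms by (auto simp: RH_inf_def)
  have avg: "0 \<le> cube_avg v Q" for Q
    using assms by (intro cube_avg_nonneg) (auto simp: RH_inf_def weight_def elim: eventually_mono)
  show thesis
  proof (rule that[of "max C0 1"])
    fix Q :: "'a set" assume Q: "is_cube Q"
    have "C0 * cube_avg v Q \<le> max C0 1 * cube_avg v Q"
      using avg by (intro mult_right_mono) auto
    with C0[OF Q] show "AE x in lebesgue. x \<in> Q \<longrightarrow> v x \<le> max C0 1 * cube_avg v Q"
      by (auto elim!: eventually_mono)
  qed simp
qed

lemma conj_exp_minus_one: "1 < q \<Longrightarrow> conj_exp q - 1 = 1 / (q - 1)"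
  by (simp add: conj_exp_def field_simps)

lemma conj_exp_gt_one: "1 < q \<Longrightarrow> 1 < conj_exp q"
  by (simp add: conj_exp_def)

lemma conj_exp_less:
  assumes "1 < q" "q < p"
  shows "conj_exp p < conj_exp q"
proof -
  have "1 / (p - 1) < 1 / (q - 1)"
    using assms by (intro divide_strict_left_mono) auto
  with assms show ?thesis using conj_exp_minus_one[of q] conj_exp_minus_one[of p] by simp
qed

lemma A_class_dual_avg_le:
  assumes v: "A_class q v" and q: "1 < q"
  obtains C where "0 < C"
    "\<And>Q. is_cube Q \<Longrightarrow> cube_avg (\<lambda>x. v x powr (1 - conj_exp q)) Q \<le> C * cube_avg v Q powr (1 - conj_exp q)"
proof -
  obtain C0 where C0: "\<And>Q. is_cube Q \<Longrightarrow>
      cube_avg v Q * cube_avg (\<lambda>x. v x powr (1 - conj_exp q)) Q powr (q - 1) \<le> C0"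
    using v by (auto simp: A_class_def)
  define C1 where "C1 = max C0 1"
  have C1: "0 < C1" by (simp add: C1_def)
  have dual: "1 - conj_exp q = - (1 / (q - 1))"
    using conj_exp_minus_one[OF q] by simp
  show thesis
  proof (rule that[of "C1 powr (1 / (q - 1))"])
    fix Q :: "'a set" assume Q: "is_cube Q"
    define A W where "A = cube_avg v Q" and "W = cube_avg (\<lambda>x. v x powr (1 - conj_exp q)) Q"
    have A: "0 < A" unfolding A_def using v Q by (intro cube_avg_pos) (auto simp: A_class_def)
    have W: "0 \<le> W" unfolding W_def by (intro cube_avg_nonneg) simp
    have "W powr (q - 1) \<le> C1 / A"
      using C0[OF Q] A by (simp add: A_def W_def C1_def field_simps)
    hence "(W powr (q - 1)) powr (1 / (q - 1)) \<le> (C1 / A) powr (1 / (q - 1))"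
      using q by (intro powr_mono2) auto
    thus "W \<le> C1 powr (1 / (q - 1)) * A powr (1 - conj_exp q)"
      using q W A C1 by (simp add: powr_powr dual powr_divide powr_minus_divide)
  qed (use C1 in simp)
qed

lemma log_plus_nonneg: "0 \<le> log_plus t"
  by (simp add: log_plus_def)

lemma log_plus_mult:
  assumes "0 \<le> s" "0 \<le> t"
  shows "log_plus (s * t) \<le> log_plus s + log_plus t"
proof (cases "s = 0 \<or> t = 0")
  case True thus ?thesis by (auto simp: log_plus_def)
next
  case False
  with assms have "ln (s * t) = ln s + ln t" by (simp add: ln_mult)
  thus ?thesis unfolding log_plus_def by auto
qed

lemma log_plus_mono:
  assumes "0 \<le> s" "s \<le> t"
  shows "log_plus s \<le> log_plus t"
proof (cases "s = 0")
  case False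
  with assms have "ln s \<le> ln t" by simp
  thus ?thesis by (auto simp: log_plus_def)
qed (simp add: log_plus_def)

lemma Phi_nonneg: "0 \<le> t \<Longrightarrow> 0 \<le> Phi m e t"
  by (simp add: Phi_def)

lemma Phi_submult:
  assumes "0 \<le> s" "0 \<le> t" "0 \<le> e"
  shows "Phi m e (s * t) \<le> Phi m e s * Phi m e t"
proof -
  let ?k = "real m + e" and ?L = "\<lambda>x. 1 + log_plus x"
  have "?L (s * t) \<le> ?L s * ?L t"
    using log_plus_mult[OF assms(1,2)] mult_nonneg_nonneg[OF log_plus_nonneg log_plus_nonneg, of s t]
    by (simp add: algebra_simps)
  hence "?L (s * t) powr ?k \<le> (?L s * ?L t) powr ?k"
    using assms(3) log_plus_nonneg[of "s * t"] by (intro powr_mono2) auto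
  also have "\<dots> = ?L s powr ?k * ?L t powr ?k"
    using log_plus_nonneg[of s] log_plus_nonneg[of t] by (simp add: powr_mult)
  finally have "(s * t) * ?L (s * t) powr ?k \<le> (s * t) * (?L s powr ?k * ?L t powr ?k)"
    using assms by (intro mult_left_mono) auto
  thus ?thesis by (simp add: Phi_def algebra_simps)
qed

lemma powr_log_plus_powr_bounded:
  assumes "0 < \<alpha>" "0 < \<delta>" "0 < k" "1 \<le> C"
  obtains B where "0 < B"
    "\<And>a. 0 < a \<Longrightarrow> a \<le> C \<Longrightarrow> a powr \<delta> * (1 + log_plus (a powr - \<alpha>)) powr k \<le> B"
proof -
  define \<eta> where "\<eta> = \<delta> / k"
  have \<eta>: "0 < \<eta>" "\<eta> * k = \<delta>" using assms by (simp_all add: \<eta>_def)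
  define M where "M = (1 + \<alpha> / \<eta>) powr k"
  have "0 < 1 + \<alpha> / \<eta>" using assms \<eta> by (simp add: add_pos_pos)
  hence "0 < M" by (simp add: M_def)
  show thesis
  proof (rule that[of "max (C powr \<delta>) M"])
    fix a :: real assume a: "0 < a" "a \<le> C"
    show "a powr \<delta> * (1 + log_plus (a powr - \<alpha>)) powr k \<le> max (C powr \<delta>) M"
    proof (cases "1 \<le> a")
      case True
      hence "log_plus (a powr - \<alpha>) = 0"
        using assms by (simp add: log_plus_def)
      moreover have "a powr \<delta> \<le> C powr \<delta>" using a assms by (intro powr_mono2) auto
      ultimately show ?thesis by simp
    next
      case False
      define y where "y = 1 / a"
      have y: "1 \<le> y" "0 < y" using False a by (simp_all add: y_def)
      have "0 \<le> \<alpha> * ln y" using assms y by simp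
      hence "log_plus (a powr - \<alpha>) = \<alpha> * ln y"
        using a by (simp add: y_def log_plus_def ln_div)
      also have "\<dots> \<le> \<alpha> * (y powr \<eta> / \<eta>)"
        using ln_powr_bound[OF y(1) \<eta>(1)] assms by (intro mult_left_mono) auto
      also have "\<dots> \<le> (1 + \<alpha> / \<eta>) * y powr \<eta> - 1"
        using ge_one_powr_ge_zero[OF y(1), of \<eta>] \<eta> by (simp add: distrib_right)
      finally have "1 + log_plus (a powr - \<alpha>) \<le> (1 + \<alpha> / \<eta>) * y powr \<eta>"
        by simp
      hence "(1 + log_plus (a powr - \<alpha>)) powr k \<le> ((1 + \<alpha> / \<eta>) * y powr \<eta>) powr k"
        using assms log_plus_nonneg[of "a powr - \<alpha>"] by (intro powr_mono2) auto
      also have "\<dots> = M * y powr \<delta>"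
        using assms \<eta> y by (simp add: M_def powr_mult powr_powr)
      finally have "a powr \<delta> * (1 + log_plus (a powr - \<alpha>)) powr k \<le> a powr \<delta> * (M * y powr \<delta>)"
        using a by (intro mult_left_mono) auto
      also have "\<dots> = M"
        using a by (simp add: y_def powr_divide)
      finally show ?thesis by simp
    qed
  qed (use \<open>0 < M\<close> in simp)
qed

lemma Phi_powr_div_le:
  assumes "0 < \<alpha>" "\<alpha> < \<beta>" "0 < e" "1 \<le> C1" "0 < C2"
  obtains c where "1 \<le> c"
    "\<And>a. 0 < a \<Longrightarrow> a \<le> C1 \<Longrightarrow> Phi m e (a powr - \<alpha> / c) \<le> a powr - \<beta> / C2"
proof -
  let ?k = "real m + e"
  obtain B where B: "0 < B"
      "\<And>a. 0 < a \<Longrightarrow> a \<le> C1 \<Longrightarrow> a powr (\<beta> - \<alpha>) * (1 + log_plus (a powr - \<alpha>)) powr ?k \<le> B"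
    using powr_log_plus_powr_bounded[of \<alpha> "\<beta> - \<alpha>" ?k C1] assms by auto
  define c where "c = max 1 (C2 * B)"
  have c: "1 \<le> c" "C2 * B \<le> c" by (simp_all add: c_def)
  show thesis
  proof (rule that[OF c(1)])
    fix a :: real assume a: "0 < a" "a \<le> C1"
    have "log_plus (a powr - \<alpha> / c) \<le> log_plus (a powr - \<alpha>)"
      using c by (intro log_plus_mono) (simp_all add: divide_le_eq mult_le_cancel_left1)
    hence "(1 + log_plus (a powr - \<alpha> / c)) powr ?k \<le> (1 + log_plus (a powr - \<alpha>)) powr ?k"
      using assms log_plus_nonneg[of "a powr - \<alpha> / c"] by (intro powr_mono2) auto
    hence "Phi m e (a powr - \<alpha> / c) \<le> a powr - \<alpha> / c * (1 + log_plus (a powr - \<alpha>)) powr ?k"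
      unfolding Phi_def using c by (intro mult_left_mono) auto
    also have "\<dots> = a powr (\<beta> - \<alpha>) * (1 + log_plus (a powr - \<alpha>)) powr ?k * a powr - \<beta> / c"
      using a by (simp add: powr_diff powr_minus field_simps)
    also have "\<dots> \<le> B * a powr - \<beta> / c"
      using B(2)[OF a] c by (intro divide_right_mono mult_right_mono) auto
    also have "\<dots> \<le> a powr - \<beta> / C2"
    proof -
      have "(C2 * B) * a powr - \<beta> \<le> c * a powr - \<beta>"
        using c(2) by (intro mult_right_mono) auto
      thus ?thesis using c assms by (simp add: field_simps)
    qed
    finally show "Phi m e (a powr - \<alpha> / c) \<le> a powr - \<beta> / C2" .
  qed
qed

lemma Phi_powr_weight_le:
  assumes Phi_le: "\<And>a. 0 < a \<Longrightarrow> a \<le> C1 \<Longrightarrow> Phi m e (a powr - \<alpha> / c) \<le> a powr - \<beta> / C2"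
    and "0 \<le> e" "0 < c" "0 < A" "0 < r" "0 \<le> t" "0 < s" "s \<le> C1 * A"
  shows "Phi m e (\<bar>t * s powr - \<alpha>\<bar> / (c * A powr - \<alpha> * r))
    \<le> A powr \<beta> / C2 * (Phi m e (\<bar>t\<bar> / r) * s powr - \<beta>)"
proof -
  define a where "a = s / A"
  have a: "0 < a" "a \<le> C1" using assms by (auto simp: a_def field_simps)
  have eq: "\<bar>t * s powr - \<alpha>\<bar> / (c * A powr - \<alpha> * r) = (t / r) * (a powr - \<alpha> / c)"
    using assms by (simp add: a_def powr_divide field_simps)
  have "Phi m e (\<bar>t * s powr - \<alpha>\<bar> / (c * A powr - \<alpha> * r)) \<le> Phi m e (t / r) * Phi m e (a powr - \<alpha> / c)"
    unfolding eq using assms by (intro Phi_submult) auto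
  also have "\<dots> \<le> Phi m e (t / r) * (a powr - \<beta> / C2)"
    using Phi_le[OF a] assms by (intro mult_left_mono Phi_nonneg) auto
  also have "a powr - \<beta> = A powr \<beta> * s powr - \<beta>"
    using assms by (simp add: a_def powr_divide powr_minus field_simps)
  finally show ?thesis using assms by (simp add: field_simps)
qed

definition orlicz_mean :: "(real \<Rightarrow> real) \<Rightarrow> ('a::euclidean_space \<Rightarrow> real) \<Rightarrow> 'a set
     \<Rightarrow> ('a \<Rightarrow> real) \<Rightarrow> real \<Rightarrow> ennreal" where
  "orlicz_mean \<phi> w Q f r =
     (\<integral>\<^sup>+ x. ennreal (\<phi> (\<bar>f x\<bar> / r) * w x) * indicator Q x \<partial>lebesgue)
       / (\<integral>\<^sup>+ x. ennreal (w x) * indicator Q x \<partial>lebesgue)"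

lemma lux_norm_eq_Inf_orlicz_mean:
  "lux_norm \<phi> w Q f = Inf (ennreal ` {r. 0 < r \<and> orlicz_mean \<phi> w Q f r \<le> 1})"
  by (simp add: lux_norm_def orlicz_mean_def)

lemma ennreal_divide_le_one_iff:
  fixes a b :: ennreal
  assumes "b \<noteq> \<infinity>"
  shows "a / b \<le> 1 \<longleftrightarrow> a \<le> b"
proof (cases "b = 0")
  case False
  show ?thesis
  proof
    assume "a / b \<le> 1"
    hence "a / b * b \<le> 1 * b" by (rule mult_right_mono) simp
    thus "a \<le> b" using False assms by (simp add: ennreal_divide_times less_top)
  next
    assume "a \<le> b"
    thus "a / b \<le> 1" using False by (intro divide_le_posI_ennreal) (auto simp: zero_less_iff_neq_zero)
  qed
qed (auto simp: top_unique)

lemma Inf_image_cmult_le_ennreal: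
  fixes K :: real and Y :: "ennreal set"
  assumes "0 < K"
  shows "Inf ((\<lambda>y. ennreal K * y) ` Y) \<le> ennreal K * Inf Y"
proof -
  let ?z = "Inf ((\<lambda>y. ennreal K * y) ` Y)"
  have KK: "ennreal K * ennreal (1 / K) = 1" using assms by (simp flip: ennreal_mult'')
  have "ennreal (1 / K) * ?z \<le> Inf Y"
  proof (rule Inf_greatest)
    fix y assume "y \<in> Y"
    hence "?z \<le> ennreal K * y" by (intro Inf_lower) auto
    hence "ennreal (1 / K) * ?z \<le> (ennreal K * ennreal (1 / K)) * y"
      by (metis mult.assoc mult.commute mult_left_mono zero_le)
    thus "ennreal (1 / K) * ?z \<le> y" using KK by simp
  qed
  hence "ennreal K * (ennreal (1 / K) * ?z) \<le> ennreal K * Inf Y" by (intro mult_left_mono) auto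
  thus ?thesis using KK by (simp add: mult.assoc[symmetric])
qed

lemma lux_norm_le_cmult:
  assumes K: "0 < K"
    and admissible: "\<And>r. 0 < r \<Longrightarrow> orlicz_mean \<phi> w' Q g r \<le> 1 \<Longrightarrow> orlicz_mean \<phi> w Q f (K * r) \<le> 1"
  shows "lux_norm \<phi> w Q f \<le> ennreal K * lux_norm \<phi> w' Q g"
proof -
  let ?S = "\<lambda>w f. {r. 0 < r \<and> orlicz_mean \<phi> w Q f r \<le> 1}"
  have "(\<lambda>y. ennreal K * y) ` ennreal ` ?S w' g \<subseteq> ennreal ` ?S w f"
  proof
    fix z assume "z \<in> (\<lambda>y. ennreal K * y) ` ennreal ` ?S w' g"
    then obtain r where r: "r \<in> ?S w' g" "z = ennreal K * ennreal r" by auto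
    hence "z = ennreal (K * r)" using K by (simp add: ennreal_mult)
    with K r(1) admissible show "z \<in> ennreal ` ?S w f" by auto
  qed
  hence "Inf (ennreal ` ?S w f) \<le> Inf ((\<lambda>y. ennreal K * y) ` ennreal ` ?S w' g)"
    by (rule Inf_superset_mono)
  also have "\<dots> \<le> ennreal K * Inf (ennreal ` ?S w' g)"
    using K by (rule Inf_image_cmult_le_ennreal)
  finally show ?thesis by (simp add: lux_norm_eq_Inf_orlicz_mean)
qed

lemma nn_integral_indicator_eq_avg:
  assumes "set_integrable lebesgue Q w" "\<And>x. 0 \<le> w x" "0 < measure lebesgue Q"
  shows "(\<integral>\<^sup>+ x. ennreal (w x) * indicator Q x \<partial>lebesgue) = ennreal (cube_avg w Q * measure lebesgue Q)"
proof -
  have "(\<integral>\<^sup>+ x. ennreal (w x) * indicator Q x \<partial>lebesgue) = (\<integral>\<^sup>+ x. ennreal (indicator Q x *\<^sub>R w x) \<partial>lebesgue)"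
    by (intro nn_integral_cong) (auto simp: indicator_def)
  also have "\<dots> = ennreal (LINT x:Q|lebesgue. w x)"
    using assms unfolding set_integrable_def set_lebesgue_integral_def
    by (intro nn_integral_eq_integral) (auto simp: indicator_def)
  finally show ?thesis using assms(3) by (simp add: cube_avg_def)
qed

lemma nn_integral_Phi_powr_weight_le:
  fixes u v :: "'a::euclidean_space \<Rightarrow> real"
  assumes [measurable]: "Q \<in> sets lebesgue"
    and u: "\<And>x. 0 \<le> u x" and [measurable]: "u \<in> borel_measurable lebesgue"
    and [measurable]: "v \<in> borel_measurable lebesgue"
    and v_bound: "AE x in lebesgue. x \<in> Q \<longrightarrow> 0 < v x \<and> v x \<le> C1 * A"
    and "0 < A" "0 < C2" "0 \<le> e" "0 < c" "0 < r"
    and Phi_le: "\<And>a. 0 < a \<Longrightarrow> a \<le> C1 \<Longrightarrow> Phi m e (a powr - \<alpha> / c) \<le> a powr - \<beta> / C2"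
  shows "(\<integral>\<^sup>+ x. ennreal (Phi m e (\<bar>u x * v x powr - \<alpha>\<bar> / (c * A powr - \<alpha> * r)) * 1) * indicator Q x \<partial>lebesgue)
    \<le> ennreal (A powr \<beta> / C2) *
      (\<integral>\<^sup>+ x. ennreal (Phi m e (\<bar>u x\<bar> / r) * v x powr - \<beta>) * indicator Q x \<partial>lebesgue)"
proof -
  let ?N = "\<lambda>x. ennreal (Phi m e (\<bar>u x\<bar> / r) * v x powr - \<beta>) * indicator Q x"
  have "(\<integral>\<^sup>+ x. ennreal (Phi m e (\<bar>u x * v x powr - \<alpha>\<bar> / (c * A powr - \<alpha> * r)) * 1) * indicator Q x \<partial>lebesgue)
      \<le> (\<integral>\<^sup>+ x. ennreal (A powr \<beta> / C2) * ?N x \<partial>lebesgue)"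
    using v_bound
  proof (intro nn_integral_mono_AE, eventually_elim)
    case (elim x)
    show ?case
    proof (cases "x \<in> Q")
      case True
      with elim assms have "Phi m e (\<bar>u x * v x powr - \<alpha>\<bar> / (c * A powr - \<alpha> * r))
          \<le> A powr \<beta> / C2 * (Phi m e (\<bar>u x\<bar> / r) * v x powr - \<beta>)"
        by (intro Phi_powr_weight_le[OF Phi_le]) auto
      with True assms show ?thesis
        by (simp add: ennreal_mult''[symmetric] ennreal_leI Phi_nonneg)
    qed simp
  qed
  also have "\<dots> = ennreal (A powr \<beta> / C2) * (\<integral>\<^sup>+ x. ?N x \<partial>lebesgue)"
    by (rule nn_integral_cmult) (unfold Phi_def log_plus_def, measurable)
  finally show ?thesis .
qed

lemma lux_norm_powr_weight_le:
  fixes u v :: "'a::euclidean_space \<Rightarrow> real"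
  assumes Q: "Q \<in> lmeasurable" "0 < measure lebesgue Q"
    and u: "\<And>x. 0 \<le> u x" "u \<in> borel_measurable lebesgue"
    and v_meas: "v \<in> borel_measurable lebesgue"
    and v_bound: "AE x in lebesgue. x \<in> Q \<longrightarrow> 0 < v x \<and> v x \<le> C1 * A"
    and A: "0 < A"
    and w_int: "set_integrable lebesgue Q (\<lambda>x. v x powr - \<beta>)"
    and w_avg: "cube_avg (\<lambda>x. v x powr - \<beta>) Q \<le> C2 * A powr - \<beta>"
    and C2: "0 < C2" and e: "0 \<le> e" and c: "0 < c"
    and Phi_le: "\<And>a. 0 < a \<Longrightarrow> a \<le> C1 \<Longrightarrow> Phi m e (a powr - \<alpha> / c) \<le> a powr - \<beta> / C2"
  shows "lux_norm (Phi m e) (\<lambda>_. 1) Q (\<lambda>x. u x * v x powr - \<alpha>)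
    \<le> ennreal (c * A powr - \<alpha>) * lux_norm (Phi m e) (\<lambda>x. v x powr - \<beta>) Q u"
proof (rule lux_norm_le_cmult)
  show "0 < c * A powr - \<alpha>" using c A by simp
  fix r :: real
  assume r: "0 < r" and mean: "orlicz_mean (Phi m e) (\<lambda>x. v x powr - \<beta>) Q u r \<le> 1"
  let ?W = "cube_avg (\<lambda>x. v x powr - \<beta>) Q * measure lebesgue Q"
  have W: "(\<integral>\<^sup>+ x. ennreal (v x powr - \<beta>) * indicator Q x \<partial>lebesgue) = ennreal ?W"
    using w_int Q(2) by (intro nn_integral_indicator_eq_avg) auto
  have "(\<integral>\<^sup>+ x. ennreal (Phi m e (\<bar>u x * v x powr - \<alpha>\<bar> / (c * A powr - \<alpha> * r)) * 1) * indicator Q x \<partial>lebesgue)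
      \<le> ennreal (A powr \<beta> / C2) *
        (\<integral>\<^sup>+ x. ennreal (Phi m e (\<bar>u x\<bar> / r) * v x powr - \<beta>) * indicator Q x \<partial>lebesgue)"
    using Q(1) u v_meas v_bound A C2 e c r Phi_le by (intro nn_integral_Phi_powr_weight_le) auto
  also have "\<dots> \<le> ennreal (A powr \<beta> / C2) * ennreal (C2 * A powr - \<beta> * measure lebesgue Q)"
  proof (intro mult_left_mono)
    have "(\<integral>\<^sup>+ x. ennreal (Phi m e (\<bar>u x\<bar> / r) * v x powr - \<beta>) * indicator Q x \<partial>lebesgue) \<le> ennreal ?W"
      using mean by (simp add: orlicz_mean_def W ennreal_divide_le_one_iff)
    also have "\<dots> \<le> ennreal (C2 * A powr - \<beta> * measure lebesgue Q)"
      using w_avg Q(2) by (intro ennreal_leI mult_right_mono) auto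
    finally show "(\<integral>\<^sup>+ x. ennreal (Phi m e (\<bar>u x\<bar> / r) * v x powr - \<beta>) * indicator Q x \<partial>lebesgue)
      \<le> ennreal (C2 * A powr - \<beta> * measure lebesgue Q)" .
  qed simp
  also have "\<dots> = ennreal (measure lebesgue Q)"
    using C2 A by (simp add: ennreal_mult''[symmetric] powr_minus field_simps)
  also have "\<dots> = (\<integral>\<^sup>+ x. ennreal 1 * indicator Q x \<partial>lebesgue)"
    using Q(1) by (simp add: emeasure_eq_measure2)
  finally show "orlicz_mean (Phi m e) (\<lambda>_. 1) Q (\<lambda>x. u x * v x powr - \<alpha>) (c * A powr - \<alpha> * r) \<le> 1"
    using Q(1) unfolding orlicz_mean_def
    by (subst ennreal_divide_le_one_iff) (simp_all add: emeasure_eq_measure2)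
qed

text \<open>The part of \<open>Q'\<close> outside \<open>Q\<close> carries at most half the mass of \<open>v\<close> on \<open>Q'\<close>.\<close>
lemma cube_avg_le_twice_of_subset:
  fixes v :: "'a::euclidean_space \<Rightarrow> real"
  assumes sub: "Q \<subseteq> Q'" and meas: "Q \<in> lmeasurable" "Q' \<in> lmeasurable"
    and pos: "0 < measure lebesgue Q"
    and int: "set_integrable lebesgue Q' v"
    and nonneg: "AE x in lebesgue. 0 \<le> v x"
    and bound: "AE x in lebesgue. x \<in> Q' \<longrightarrow> v x \<le> C * cube_avg v Q'"
    and C: "0 \<le> C"
    and ratio: "2 * C * (measure lebesgue Q' - measure lebesgue Q) \<le> measure lebesgue Q'"
  shows "cube_avg v Q' \<le> 2 * cube_avg v Q"
proof -
  define A A' where "A = cube_avg v Q" and "A' = cube_avg v Q'"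
  have sets: "Q \<in> sets lebesgue" "Q' - Q \<in> sets lebesgue" "Q' - Q \<in> lmeasurable"
    using meas by auto
  have mle: "measure lebesgue Q \<le> measure lebesgue Q'"
    using sub meas by (intro measure_mono_fmeasurable) auto
  have pos': "0 < measure lebesgue Q'" using pos mle by linarith
  have A: "0 \<le> A" "0 \<le> A'" using nonneg by (simp_all add: A_def A'_def cube_avg_nonneg)
  have intQ: "set_integrable lebesgue Q v" and intD: "set_integrable lebesgue (Q' - Q) v"
    using sub sets by (auto intro: set_integrable_subset[OF int])
  have "(LINT x:Q'|lebesgue. v x) = (LINT x:Q|lebesgue. v x) + (LINT x:Q'-Q|lebesgue. v x)"
    using set_integral_Un[OF _ intQ intD] sub by (simp add: Un_absorb1)
  also have "(LINT x:Q'-Q|lebesgue. v x) \<le> (LINT x:Q'-Q|lebesgue. C * A')"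
  proof (rule set_integral_mono_AE[OF intD])
    show "set_integrable lebesgue (Q' - Q) (\<lambda>x. C * A')"
      using sets unfolding set_integrable_def fmeasurable_def
      by (intro integrable_scaleR_left integrable_real_indicator) auto
    show "AE x\<in>Q' - Q in lebesgue. v x \<le> C * A'"
      using bound by (auto simp: A'_def elim: eventually_mono)
  qed
  also have "\<dots> = (measure lebesgue Q' - measure lebesgue Q) * (C * A')"
  proof -
    have "measure lebesgue (Q' - Q) = measure lebesgue Q' - measure lebesgue Q"
      using meas sub by (intro measure_Diff) (auto simp: fmeasurable_def)
    thus ?thesis using sets(3) by (subst set_integral_const) (auto simp: fmeasurable_def)
  qed
  also have "\<dots> \<le> A' * measure lebesgue Q' / 2"
  proof -
    have "A' * (2 * C * (measure lebesgue Q' - measure lebesgue Q))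
        = 2 * ((measure lebesgue Q' - measure lebesgue Q) * (C * A'))"
      by (simp add: algebra_simps)
    thus ?thesis using mult_left_mono[OF ratio A(2)] by linarith
  qed
  finally have "A' * measure lebesgue Q' \<le> A * measure lebesgue Q + A' * measure lebesgue Q' / 2"
    using pos pos' by (simp add: A_def A'_def cube_avg_def)
  also have "A * measure lebesgue Q \<le> A * measure lebesgue Q'" using mle A(1) by (rule mult_left_mono)
  finally have "A' * measure lebesgue Q' \<le> (2 * A) * measure lebesgue Q'" by linarith
  thus ?thesis using pos' by (simp add: A_def A'_def)
qed

lemma dense_cube_superset:
  fixes a :: "'a::euclidean_space" and D :: "'a set"
  assumes dense: "\<And>U. open U \<Longrightarrow> U \<noteq> {} \<Longrightarrow> \<exists>d\<in>D. d \<in> U"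
    and s: "0 < s" and \<gamma>: "1 < \<gamma>"
  obtains d t where "d \<in> D" "t \<in> \<rat>" "0 < t"
    "cbox a (a + s *\<^sub>R One) \<subseteq> cbox d (d + t *\<^sub>R One)" "t ^ DIM('a) \<le> \<gamma> * s ^ DIM('a)"
proof -
  define r where "r = root DIM('a) \<gamma>"
  have r: "r ^ DIM('a) = \<gamma>" "1 < r"
    using \<gamma> by (simp_all add: r_def real_root_pow_pos2)
  define g where "g = s * r - s"
  have g: "0 < g" using s r by (simp add: g_def)
  obtain t where t: "t \<in> \<rat>" "s + g / 2 < t" "t < s + g"
    using Rats_dense_in_real[of "s + g / 2" "s + g"] g by auto
  obtain d where d: "d \<in> D" "d \<in> ball (a - (g / 4) *\<^sub>R One) (g / 4)"
    using dense[of "ball (a - (g / 4) *\<^sub>R One) (g / 4)"] g by auto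
  have d_coord: "a \<bullet> i - g / 2 < d \<bullet> i \<and> d \<bullet> i < a \<bullet> i" if i: "i \<in> Basis" for i
  proof -
    have "\<bar>(d - (a - (g / 4) *\<^sub>R One)) \<bullet> i\<bar> < g / 4"
      using Basis_le_norm[OF i] d(2) by (smt (verit) dist_norm mem_ball norm_minus_commute)
    hence "\<bar>d \<bullet> i - (a \<bullet> i - g / 4)\<bar> < g / 4" using i by (simp add: inner_simps)
    thus ?thesis unfolding abs_less_iff by linarith
  qed
  have t0: "0 < t" using t s g by linarith
  show thesis
  proof (rule that[OF d(1) t(1) t0])
    show "cbox a (a + s *\<^sub>R One) \<subseteq> cbox d (d + t *\<^sub>R One)"
    proof
      fix y assume "y \<in> cbox a (a + s *\<^sub>R One)"
      hence "\<forall>i\<in>Basis. d \<bullet> i \<le> y \<bullet> i \<and> y \<bullet> i \<le> d \<bullet> i + t"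
        using d_coord t by (force simp: mem_box inner_simps)
      thus "y \<in> cbox d (d + t *\<^sub>R One)" by (simp add: mem_box inner_simps)
    qed
    have "t ^ DIM('a) \<le> (s * r) ^ DIM('a)"
      using t t0 by (intro power_mono) (auto simp: g_def)
    thus "t ^ DIM('a) \<le> \<gamma> * s ^ DIM('a)" using r by (simp add: power_mult_distrib mult_ac)
  qed
qed

lemma cube_avg_le_twice_dense_superset:
  fixes v :: "'a::euclidean_space \<Rightarrow> real"
  assumes dense: "\<And>U. open U \<Longrightarrow> U \<noteq> {} \<Longrightarrow> \<exists>d\<in>D. d \<in> U"
    and int: "\<And>Q. is_cube Q \<Longrightarrow> set_integrable lebesgue Q v"
    and nonneg: "AE x in lebesgue. 0 \<le> v x"
    and RH: "\<And>Q. is_cube Q \<Longrightarrow> AE x in lebesgue. x \<in> Q \<longrightarrow> v x \<le> C * cube_avg v Q"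
    and C: "1 \<le> C" and Q: "is_cube Q"
  obtains d t where "d \<in> D" "t \<in> \<rat>" "0 < t" "Q \<subseteq> cbox d (d + t *\<^sub>R One)"
    "cube_avg v (cbox d (d + t *\<^sub>R One)) \<le> 2 * cube_avg v Q"
proof -
  from Q obtain a s where as: "0 < s" "Q = cbox a (a + s *\<^sub>R One)" by (rule is_cubeE)
  define \<gamma> where "\<gamma> = 2 * C / (2 * C - 1)"
  have \<gamma>: "1 < \<gamma>" using C by (simp add: \<gamma>_def field_simps)
  obtain d t where dt: "d \<in> D" "t \<in> \<rat>" "0 < t" "Q \<subseteq> cbox d (d + t *\<^sub>R One)"
      "t ^ DIM('a) \<le> \<gamma> * s ^ DIM('a)"
    using dense_cube_superset[OF dense as(1) \<gamma>] as(2) by metis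
  define Q' where "Q' = cbox d (d + t *\<^sub>R One)"
  have Q': "is_cube Q'" using dt(3) by (simp add: Q'_def is_cube_cbox_One)
  have "(2 * C - 1) * t ^ DIM('a) \<le> (2 * C - 1) * (\<gamma> * s ^ DIM('a))"
    using dt(5) C by (intro mult_left_mono) auto
  also have "\<dots> = 2 * C * s ^ DIM('a)"
    using C by (simp add: \<gamma>_def)
  finally have "2 * C * (t ^ DIM('a) - s ^ DIM('a)) \<le> t ^ DIM('a)"
    by (simp add: algebra_simps)
  moreover have "measure lebesgue Q = s ^ DIM('a)" "measure lebesgue Q' = t ^ DIM('a)"
    unfolding as(2) Q'_def using as(1) dt(3) by (simp_all only: measure_cbox_One)
  ultimately have "2 * C * (measure lebesgue Q' - measure lebesgue Q) \<le> measure lebesgue Q'"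
    by simp
  hence "cube_avg v Q' \<le> 2 * cube_avg v Q"
    using C dt(4) by (intro cube_avg_le_twice_of_subset[OF _ is_cube_lmeasurable[OF Q]
        is_cube_lmeasurable[OF Q'] measure_cube_pos[OF Q] int[OF Q'] nonneg RH[OF Q']])
      (auto simp: Q'_def)
  with dt(1-4) show thesis by (intro that) (auto simp: Q'_def)
qed

text \<open>\<open>RH\<^sub>\<infinity>\<close> holds only almost everywhere on each single cube. Testing it on the countably many
  cubes with corners in a countable dense set and rational sides, and approximating an arbitrary cube
  from outside by one of them, gives one null set that works for all cubes at once.\<close>
lemma RH_bound_AE_all_cubes:
  fixes v :: "'a::euclidean_space \<Rightarrow> real"
  assumes int: "\<And>Q. is_cube Q \<Longrightarrow> set_integrable lebesgue Q v"
    and nonneg: "AE x in lebesgue. 0 \<le> v x"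
    and RH: "\<And>Q. is_cube Q \<Longrightarrow> AE x in lebesgue. x \<in> Q \<longrightarrow> v x \<le> C * cube_avg v Q"
    and C: "1 \<le> C"
  shows "AE x in lebesgue. \<forall>Q. is_cube Q \<and> x \<in> Q \<longrightarrow> v x \<le> 2 * C * cube_avg v Q"
proof -
  obtain D :: "'a set" where D: "countable D" "\<And>U. open U \<Longrightarrow> U \<noteq> {} \<Longrightarrow> \<exists>d\<in>D. d \<in> U"
    using countable_dense_exists by blast
  define F where "F = (\<lambda>(d, t). cbox d (d + t *\<^sub>R (One::'a))) ` (D \<times> (\<rat> \<inter> {0<..}))"
  have "countable F"
    unfolding F_def using D(1) countable_rat by (intro countable_image countable_SIGMA) auto
  moreover have "is_cube Q'" if "Q' \<in> F" for Q'
    using that by (auto simp: F_def intro: is_cube_cbox_One)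
  ultimately have "AE x in lebesgue. \<forall>Q'\<in>F. x \<in> Q' \<longrightarrow> v x \<le> C * cube_avg v Q'"
    using RH by (intro AE_ball_countable') auto
  thus ?thesis
  proof eventually_elim
    case (elim x)
    show ?case
    proof (intro allI impI, elim conjE)
      fix Q assume Q: "is_cube Q" and x: "x \<in> Q"
      obtain d t where dt: "d \<in> D" "t \<in> \<rat>" "0 < t" "Q \<subseteq> cbox d (d + t *\<^sub>R One)"
          "cube_avg v (cbox d (d + t *\<^sub>R One)) \<le> 2 * cube_avg v Q"
        using cube_avg_le_twice_dense_superset[OF D(2) int nonneg RH C Q] by metis
      hence "v x \<le> C * cube_avg v (cbox d (d + t *\<^sub>R One))"
        using elim x by (auto simp: F_def)
      also have "\<dots> \<le> C * (2 * cube_avg v Q)" using dt(5) C by (intro mult_left_mono) auto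
      finally show "v x \<le> 2 * C * cube_avg v Q" by simp
    qed
  qed
qed

lemma lux_norm_powr_weight_cube_le:
  fixes u v :: "'a::euclidean_space \<Rightarrow> real"
  assumes e: "0 < e" and q: "1 < q" and \<alpha>: "0 < \<alpha>" "\<alpha> < conj_exp q - 1"
    and u: "\<And>x. 0 \<le> u x" "u \<in> borel_measurable lebesgue"
    and A_q: "A_class q v"
    and C1: "1 \<le> C1" and RH: "\<And>Q. is_cube Q \<Longrightarrow> AE x in lebesgue. x \<in> Q \<longrightarrow> v x \<le> C1 * cube_avg v Q"
  obtains c where "0 < c"
    "\<And>Q. is_cube Q \<Longrightarrow> lux_norm (Phi m e) (\<lambda>_. 1) Q (\<lambda>x. u x * v x powr - \<alpha>)
       \<le> ennreal (c * cube_avg v Q powr - \<alpha>) * lux_norm (Phi m e) (\<lambda>x. v x powr (1 - conj_exp q)) Q u"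
proof -
  define \<beta> where "\<beta> = conj_exp q - 1"
  have dual: "1 - conj_exp q = - \<beta>" by (simp add: \<beta>_def)
  have v: "weight v" and v_int: "\<And>Q. is_cube Q \<Longrightarrow> set_integrable lebesgue Q (\<lambda>x. v x powr - \<beta>)"
    using A_q by (auto simp: A_class_def dual)
  have v_meas: "v \<in> borel_measurable lebesgue" and v_pos: "AE x in lebesgue. 0 < v x"
    using v by (auto simp: weight_def locally_integrable_def)
  obtain C2 where C2: "0 < C2"
      "\<And>Q. is_cube Q \<Longrightarrow> cube_avg (\<lambda>x. v x powr - \<beta>) Q \<le> C2 * cube_avg v Q powr - \<beta>"
    using A_class_dual_avg_le[OF A_q q] unfolding dual by blast
  have "\<alpha> < \<beta>" using \<alpha>(2) by (simp add: \<beta>_def)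
  then obtain c where c: "1 \<le> c" "\<And>a. 0 < a \<Longrightarrow> a \<le> C1 \<Longrightarrow> Phi m e (a powr - \<alpha> / c) \<le> a powr - \<beta> / C2"
    using Phi_powr_div_le[OF \<alpha>(1) _ e C1 C2(1)] by blast
  show thesis
  proof (rule that)
    show "0 < c" using c by simp
    fix Q :: "'a set" assume Q: "is_cube Q"
    have "AE x in lebesgue. x \<in> Q \<longrightarrow> 0 < v x \<and> v x \<le> C1 * cube_avg v Q"
      using RH[OF Q] v_pos by eventually_elim auto
    thus "lux_norm (Phi m e) (\<lambda>_. 1) Q (\<lambda>x. u x * v x powr - \<alpha>)
       \<le> ennreal (c * cube_avg v Q powr - \<alpha>) * lux_norm (Phi m e) (\<lambda>x. v x powr (1 - conj_exp q)) Q u"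
      unfolding dual using c e
      by (intro lux_norm_powr_weight_le[OF is_cube_lmeasurable[OF Q] measure_cube_pos[OF Q] u v_meas _
            cube_avg_pos[OF v Q] v_int[OF Q] C2(2)[OF Q] C2(1)]) auto
  qed
qed

lemma orlicz_max_le_cmult:
  assumes "\<And>Q. is_cube Q \<Longrightarrow> x \<in> Q \<Longrightarrow> lux_norm \<phi> w Q f \<le> K * lux_norm \<phi> w' Q g"
  shows "orlicz_max \<phi> w f x \<le> K * orlicz_max \<phi> w' g x"
  unfolding orlicz_max_def
  by (rule SUP_least) (auto intro!: order.trans[OF assms] mult_left_mono SUP_upper)

lemma powr_minus_le_of_le_mult:
  fixes a b k :: real
  assumes "0 < b" "0 < k" "b \<le> k * a" "0 \<le> \<alpha>"
  shows "a powr - \<alpha> \<le> k powr \<alpha> * b powr - \<alpha>"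
proof -
  have "b / k \<le> a" using assms by (simp add: field_simps)
  hence "a powr - \<alpha> \<le> (b / k) powr - \<alpha>"
    using assms by (intro powr_mono2') auto
  also have "\<dots> = k powr \<alpha> * b powr - \<alpha>"
    using assms by (simp add: powr_divide powr_minus field_simps)
  finally show ?thesis .
qed

lemma orlicz_max_powr_weight_le:
  fixes u v :: "'a::euclidean_space \<Rightarrow> real"
  assumes e: "0 < e" and q: "1 < q" and \<alpha>: "0 < \<alpha>" "\<alpha> < conj_exp q - 1"
    and u: "\<And>x. 0 \<le> u x" "u \<in> borel_measurable lebesgue"
    and RH: "RH_inf v" and A_q: "A_class q v"
  shows "\<exists>C>0. AE x in lebesgue. 0 < v x \<and>
    orlicz_max (Phi m e) (\<lambda>_. 1) (\<lambda>y. u y * v y powr - \<alpha>) x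
      \<le> ennreal (C * v x powr - \<alpha>) * orlicz_max (Phi m e) (\<lambda>y. v y powr (1 - conj_exp q)) u x"
proof -
  have v: "weight v" using A_q by (simp add: A_class_def)
  hence v_pos: "AE x in lebesgue. 0 < v x" by (simp add: weight_def)
  obtain C1 where C1: "1 \<le> C1" "\<And>Q. is_cube Q \<Longrightarrow> AE x in lebesgue. x \<in> Q \<longrightarrow> v x \<le> C1 * cube_avg v Q"
    using RH_infE[OF RH] by blast
  obtain c where c: "0 < c"
    "\<And>Q. is_cube Q \<Longrightarrow> lux_norm (Phi m e) (\<lambda>_. 1) Q (\<lambda>x. u x * v x powr - \<alpha>)
       \<le> ennreal (c * cube_avg v Q powr - \<alpha>) * lux_norm (Phi m e) (\<lambda>x. v x powr (1 - conj_exp q)) Q u"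
    using lux_norm_powr_weight_cube_le[OF e q \<alpha> u A_q C1] by blast
  have "AE x in lebesgue. \<forall>Q. is_cube Q \<and> x \<in> Q \<longrightarrow> v x \<le> 2 * C1 * cube_avg v Q"
    using v_pos by (intro RH_bound_AE_all_cubes[OF weight_set_integrable_cube[OF v] _ C1(2) C1(1)])
      (auto elim: eventually_mono)
  with v_pos have "AE x in lebesgue. 0 < v x \<and>
    orlicz_max (Phi m e) (\<lambda>_. 1) (\<lambda>y. u y * v y powr - \<alpha>) x
      \<le> ennreal (c * (2 * C1) powr \<alpha> * v x powr - \<alpha>) * orlicz_max (Phi m e) (\<lambda>y. v y powr (1 - conj_exp q)) u x"
  proof eventually_elim
    case (elim x)
    let ?K = "ennreal (c * (2 * C1) powr \<alpha> * v x powr - \<alpha>)"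
    have "lux_norm (Phi m e) (\<lambda>_. 1) Q (\<lambda>x. u x * v x powr - \<alpha>)
        \<le> ?K * lux_norm (Phi m e) (\<lambda>x. v x powr (1 - conj_exp q)) Q u"
      if Q: "is_cube Q" "x \<in> Q" for Q
    proof -
      have "c * cube_avg v Q powr - \<alpha> \<le> c * (2 * C1) powr \<alpha> * v x powr - \<alpha>"
        using elim Q C1(1) c(1) \<alpha>(1) powr_minus_le_of_le_mult[of "v x" "2 * C1" "cube_avg v Q" \<alpha>]
        by (simp add: mult.assoc)
      hence "ennreal (c * cube_avg v Q powr - \<alpha>) \<le> ?K" by (rule ennreal_leI)
      with c(2)[OF Q(1)] show ?thesis by (rule order.trans[OF _ mult_right_mono]) simp
    qed
    with elim(1) show ?case by (simp add: orlicz_max_le_cmult)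
  qed
  thus ?thesis using c(1) C1(1) by (intro exI[of _ "c * (2 * C1) powr \<alpha>"]) auto
qed

text \<open>The two branches of \<open>\<Psi>\<close> make \<open>t\<^sup>-\<^sup>p\<^sup>' \<Psi>(t)\<close> equal to \<open>t\<^sup>1\<^sup>-\<^sup>q\<^sup>'\<close> for \<open>t < 1\<close> and to \<open>1\<close> for
  \<open>t \<ge> 1\<close>; both dominate \<open>t\<^sup>1\<^sup>-\<^sup>p\<^sup>'\<close>.\<close>
lemma powr_le_Psi:
  assumes t: "0 < t" and q: "1 < q" "q < p"
  shows "t powr (1 - conj_exp p) \<le> t powr - conj_exp p * Psi p q t"
proof (cases "t < 1")
  case True
  hence "t powr (1 - conj_exp p) \<le> t powr (1 - conj_exp q)"
    using t conj_exp_less[OF q] by (intro powr_mono') auto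
  thus ?thesis using True t by (simp add: Psi_def flip: powr_add)
next
  case False
  have "1 < conj_exp p" using q by (simp add: conj_exp_gt_one)
  hence "t powr (1 - conj_exp p) \<le> t powr 0"
    using False by (intro powr_mono) auto
  thus ?thesis using False t by (simp add: Psi_def flip: powr_add)
qed

lemma ennreal_powr_le_Psi:
  assumes "0 < C" "0 < t" "1 < q" "q < p"
  shows "ennreal (C * t powr (1 - conj_exp p)) \<le> ennreal C * ennreal (t powr - conj_exp p * Psi p q t)"
proof -
  have "ennreal (C * t powr (1 - conj_exp p)) \<le> ennreal (C * (t powr - conj_exp p * Psi p q t))"
    using powr_le_Psi[of t q p] assms by (intro ennreal_leI) simp
  also have "\<dots> = ennreal C * ennreal (t powr - conj_exp p * Psi p q t)"
    using assms(1) by (intro ennreal_mult) (auto simp: Psi_def)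
  finally show ?thesis .
qed

theorem lemma3p1:
  fixes m :: nat and \<epsilon> p q :: real
    and u v :: "'a::euclidean_space \<Rightarrow> real"
  assumes "\<epsilon> > 0" and "1 < q" and "q < p"
    and "locally_integrable u" and "\<forall>x. 0 \<le> u x"
    and "RH_inf v" and "A_class q v"
  shows "\<exists>C>0. AE x in lebesgue.
    orlicz_max (Phi m \<epsilon>) (\<lambda>_. 1) (\<lambda>y. u y * v y powr (1 - conj_exp p)) x
    \<le> ennreal C * orlicz_max (Phi m \<epsilon>) (\<lambda>y. v y powr (1 - conj_exp q)) u x
       * ennreal (v x powr (- conj_exp p) * Psi p q (v x))"
proof -
  have u: "\<And>x. 0 \<le> u x" "u \<in> borel_measurable lebesgue"
    using assms(4,5) by (auto simp: locally_integrable_def)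
  have \<alpha>: "0 < conj_exp p - 1" "conj_exp p - 1 < conj_exp q - 1"
    using assms(2,3) conj_exp_gt_one[of p] conj_exp_less[of q p] by auto
  obtain C where "0 < C" and bound: "AE x in lebesgue. 0 < v x \<and>
      orlicz_max (Phi m \<epsilon>) (\<lambda>_. 1) (\<lambda>y. u y * v y powr (1 - conj_exp p)) x
      \<le> ennreal (C * v x powr (1 - conj_exp p)) * orlicz_max (Phi m \<epsilon>) (\<lambda>y. v y powr (1 - conj_exp q)) u x"
    using orlicz_max_powr_weight_le[OF assms(1,2) \<alpha> u assms(6,7)] by auto
  have "AE x in lebesgue.
      orlicz_max (Phi m \<epsilon>) (\<lambda>_. 1) (\<lambda>y. u y * v y powr (1 - conj_exp p)) x
      \<le> ennreal C * orlicz_max (Phi m \<epsilon>) (\<lambda>y. v y powr (1 - conj_exp q)) u x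
         * ennreal (v x powr (- conj_exp p) * Psi p q (v x))"
    using bound
  proof eventually_elim
    case (elim x)
    let ?R = "orlicz_max (Phi m \<epsilon>) (\<lambda>y. v y powr (1 - conj_exp q)) u x"
    have "ennreal (C * v x powr (1 - conj_exp p)) * ?R
        \<le> (ennreal C * ennreal (v x powr (- conj_exp p) * Psi p q (v x))) * ?R"
      using ennreal_powr_le_Psi[OF \<open>0 < C\<close> _ assms(2,3)] elim by (intro mult_right_mono) auto
    with elim show ?case by (auto simp only: ac_simps intro: order.trans)
  qed
  with \<open>0 < C\<close> show ?thesis by blast
qed

end
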